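(* Let $n\ge1$, fix $a\in\{0,1\}$ and a time $t\in\{0,1,\dots,t_{\max}\}$, and let $U=\{u\in\{0,\dots,t_{\max}\}:u\le t\}$. Given data $X_1,\dots,X_n\in\mathcal X$, indicators $\iota_{iu}=\mathbf 1(A_i=a,G_i^u=1)\in\{0,1\}$ and real numbers $\hat r_{iu}=\hat r_u(X_i,a)$ for $i\le n$, $u\in U$, and a norm $\|\cdot\|$ on a vector space of real functions on $\mathcal X$, and $\sigma>0$, suppose $\hat\omega\in\mathbb R^{n\times U}$ minimizes $$I(\omega)^2+\frac{\sigma^2}{nt}\sum_{i=1}^n\sum_{u\in U}\hat r_{iu}^2\iota_{iu}\omega_{iu}^2,\qquad I(\omega)=\sup_{\sum_{u\in U}\|h_u\|^2\le1}\frac1n\sum_{i=1}^n\sum_{u\in U}\big\{\hat r_{iu}h_u(X_i)-\iota_{iu}\hat r_{iu}\omega_{iu}h_u(X_i)\big\}.$$ Then for each $u\in U$, the vector $\hat\omega_u=(\hat\omega_{1u},\dots,\hat\omega_{nu})$ minimizes over $\omega_u\in\mathbb R^n$ $$I_u(\omega_u)^2+\frac{\sigma^2}{nt}\sum_{i=1}^n\hat r_{iu}^2\iota_{iu}\omega_{iu}^2,\qquad I_u(\omega_u)=\sup_{\|h_u\|\le1}\frac1n\sum_{i=1}^n\big\{\hat r_{iu}h_u(X_i)-\iota_{iu}\hat r_{iu}\omega_{iu}h_u(X_i)\big\}.$$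
   Context: Here $A_i\in\{0,1\}$ is a treatment indicator, $G_i^u=\mathbf 1(\tilde T_i\ge u)$ is an at-risk indicator, and $\hat r_u(x,a)$ are given real-valued functions; in the paper $\hat r_u(x,a)=-\hat S_t(x,a)\hat S_{u-1}(x,a)/\hat S_u(x,a)$ for an estimated survival function $\hat S$, but the statement holds for arbitrary real $\hat r_{iu}$. *)

theory Defs
  imports Complex_Main
begin

definition normed_fun_space :: "('x \<Rightarrow> real) set \<Rightarrow> (('x \<Rightarrow> real) \<Rightarrow> real) \<Rightarrow> bool" where
  "normed_fun_space V N \<longleftrightarrow>
     (\<lambda>_. 0) \<in> V \<and>
     (\<forall>f\<in>V. \<forall>g\<in>V. (\<lambda>x. f x + g x) \<in> V) \<and>
     (\<forall>c. \<forall>f\<in>V. (\<lambda>x. c * f x) \<in> V) \<and>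
     (\<forall>f\<in>V. N f \<ge> 0) \<and>
     (\<forall>f\<in>V. N f = 0 \<longleftrightarrow> f = (\<lambda>_. 0)) \<and>
     (\<forall>c. \<forall>f\<in>V. N (\<lambda>x. c * f x) = \<bar>c\<bar> * N f) \<and>
     (\<forall>f\<in>V. \<forall>g\<in>V. N (\<lambda>x. f x + g x) \<le> N f + N g)"

text \<open>Indicator iota_{iu} = 1(A_i = a, G_i^u = 1), with G_i^u = 1(Ttilde_i >= u).\<close>
definition iota :: "(nat \<Rightarrow> nat) \<Rightarrow> (nat \<Rightarrow> real) \<Rightarrow> nat \<Rightarrow> nat \<Rightarrow> nat \<Rightarrow> real" where
  "iota A Tt a i u = (if A i = a \<and> Tt i \<ge> real u then 1 else 0)"

definition I_set :: "nat \<Rightarrow> nat set \<Rightarrow> ('x \<Rightarrow> real) set \<Rightarrow> (('x \<Rightarrow> real) \<Rightarrow> real)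
    \<Rightarrow> (nat \<Rightarrow> 'x) \<Rightarrow> (nat \<Rightarrow> nat \<Rightarrow> real) \<Rightarrow> (nat \<Rightarrow> nat \<Rightarrow> real)
    \<Rightarrow> (nat \<Rightarrow> nat \<Rightarrow> real) \<Rightarrow> real set" where
  "I_set n U V N X io r w =
     {(1 / real n) * (\<Sum>i<n. \<Sum>u\<in>U. r i u * h u (X i) - io i u * r i u * w i u * h u (X i)) | h.
        (\<forall>u\<in>U. h u \<in> V) \<and> (\<Sum>u\<in>U. (N (h u))\<^sup>2) \<le> 1}"

definition I_fun where
  "I_fun n U V N X io r w = Sup (I_set n U V N X io r w)"

definition Iu_set :: "nat \<Rightarrow> nat \<Rightarrow> ('x \<Rightarrow> real) set \<Rightarrow> (('x \<Rightarrow> real) \<Rightarrow> real)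
    \<Rightarrow> (nat \<Rightarrow> 'x) \<Rightarrow> (nat \<Rightarrow> nat \<Rightarrow> real) \<Rightarrow> (nat \<Rightarrow> nat \<Rightarrow> real)
    \<Rightarrow> (nat \<Rightarrow> real) \<Rightarrow> real set" where
  "Iu_set n u V N X io r wu =
     {(1 / real n) * (\<Sum>i<n. r i u * hu (X i) - io i u * r i u * wu i * hu (X i)) | hu.
        hu \<in> V \<and> N hu \<le> 1}"

definition Iu_fun where
  "Iu_fun n u V N X io r wu = Sup (Iu_set n u V N X io r wu)"

definition obj where
  "obj n t U V N X io r \<sigma> w =
     (I_fun n U V N X io r w)\<^sup>2 + \<sigma>\<^sup>2 / (real n * real t) *
       (\<Sum>i<n. \<Sum>u\<in>U. (r i u)\<^sup>2 * io i u * (w i u)\<^sup>2)"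

definition obj_u where
  "obj_u n t u V N X io r \<sigma> wu =
     (Iu_fun n u V N X io r wu)\<^sup>2 + \<sigma>\<^sup>2 / (real n * real t) *
       (\<Sum>i<n. (r i u)\<^sup>2 * io i u * (wu i)\<^sup>2)"

end

theory Submission
  imports Defs "HOL-Analysis.L2_Norm"
begin

text \<open>For fixed \<open>\<omega>\<close> the quantity inside the supremum \<open>I(\<omega>)\<close> is \<open>\<Sum>\<^sub>u L\<^sub>u(h\<^sub>u)\<close>, where \<open>L\<^sub>u\<close> is a
  homogeneous functional of \<open>h\<^sub>u\<close> alone whose dual norm \<open>\<parallel>L\<^sub>u\<parallel>\<^sub>*\<close> is \<open>I\<^sub>u(\<omega>\<^sub>u)\<close>. By Cauchy--Schwarz,
  \<open>\<Sum>\<^sub>u L\<^sub>u(h\<^sub>u) \<le> \<Sum>\<^sub>u \<parallel>L\<^sub>u\<parallel>\<^sub>* \<parallel>h\<^sub>u\<parallel> \<le> S = (\<Sum>\<^sub>u \<parallel>L\<^sub>u\<parallel>\<^sub>*\<^sup>2)\<^sup>1\<^sup>/\<^sup>2\<close> whenever \<open>\<Sum>\<^sub>u \<parallel>h\<^sub>u\<parallel>\<^sup>2 \<le> 1\<close>, and the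
  bound is approached by \<open>h\<^sub>u = (\<parallel>L\<^sub>u\<parallel>\<^sub>* / S) g\<^sub>u\<close> with \<open>g\<^sub>u\<close> almost maximising \<open>L\<^sub>u\<close> on the unit ball.
  Hence \<open>I(\<omega>)\<^sup>2 = \<Sum>\<^sub>u I\<^sub>u(\<omega>\<^sub>u)\<^sup>2\<close>, so the joint objective is the sum over \<open>u\<close> of the separate
  objectives, the \<open>u\<close>-th depending on the column \<open>\<omega>\<^sub>u\<close> only, and a joint minimiser minimises
  every summand.\<close>

lemma power2_L2_set: "(L2_set f A)\<^sup>2 = (\<Sum>i\<in>A. (f i)\<^sup>2)"
  unfolding L2_set_def by (simp add: sum_nonneg)

definition dual_norm :: "('x \<Rightarrow> real) set \<Rightarrow> (('x \<Rightarrow> real) \<Rightarrow> real) \<Rightarrow> (('x \<Rightarrow> real) \<Rightarrow> real) \<Rightarrow> real"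
  where "dual_norm V N L = Sup {L h | h. h \<in> V \<and> N h \<le> 1}"

definition homogeneous_on :: "('x \<Rightarrow> real) set \<Rightarrow> (('x \<Rightarrow> real) \<Rightarrow> real) \<Rightarrow> bool"
  where "homogeneous_on V L \<longleftrightarrow> (\<forall>c. \<forall>h\<in>V. L (\<lambda>x. c * h x) = c * L h)"

definition joint_values :: "'i set \<Rightarrow> ('x \<Rightarrow> real) set \<Rightarrow> (('x \<Rightarrow> real) \<Rightarrow> real)
    \<Rightarrow> ('i \<Rightarrow> ('x \<Rightarrow> real) \<Rightarrow> real) \<Rightarrow> real set"
  where "joint_values U V N L =
    {\<Sum>u\<in>U. L u (h u) | h. (\<forall>u\<in>U. h u \<in> V) \<and> (\<Sum>u\<in>U. (N (h u))\<^sup>2) \<le> 1}"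

context
  fixes V :: "('x \<Rightarrow> real) set" and N :: "('x \<Rightarrow> real) \<Rightarrow> real"
  assumes nfs: "normed_fun_space V N"
begin

lemma normed_fun_space_zero_mem: "(\<lambda>_. 0) \<in> V"
  using nfs unfolding normed_fun_space_def by blast

lemma normed_fun_space_scale_mem: "h \<in> V \<Longrightarrow> (\<lambda>x. c * h x) \<in> V"
  using nfs unfolding normed_fun_space_def by blast

lemma normed_fun_space_norm_nonneg: "h \<in> V \<Longrightarrow> 0 \<le> N h"
  using nfs unfolding normed_fun_space_def by blast

lemma normed_fun_space_norm_eq_zero: "h \<in> V \<Longrightarrow> N h = 0 \<longleftrightarrow> h = (\<lambda>_. 0)"
  using nfs unfolding normed_fun_space_def by blast

lemma normed_fun_space_norm_zero: "N (\<lambda>_. 0) = 0"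
  using normed_fun_space_norm_eq_zero normed_fun_space_zero_mem by blast

lemma normed_fun_space_norm_scale: "h \<in> V \<Longrightarrow> N (\<lambda>x. c * h x) = \<bar>c\<bar> * N h"
  using nfs unfolding normed_fun_space_def by blast

lemma homogeneous_zero:
  assumes hom: "homogeneous_on V L"
  shows "L (\<lambda>_. 0) = 0"
proof -
  have "\<forall>h\<in>V. L (\<lambda>x. 0 * h x) = 0 * L h"
    using hom unfolding homogeneous_on_def by blast
  from this[rule_format, OF normed_fun_space_zero_mem] show ?thesis
    by simp
qed

lemma dual_norm_nonneg:
  assumes hom: "homogeneous_on V L"
    and bdd: "bdd_above {L h | h. h \<in> V \<and> N h \<le> 1}"
  shows "0 \<le> dual_norm V N L"
proof -
  have "L (\<lambda>_. 0) \<le> dual_norm V N L"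
    unfolding dual_norm_def
    by (rule cSup_upper[OF _ bdd]) (use normed_fun_space_zero_mem normed_fun_space_norm_zero in auto)
  then show ?thesis
    using homogeneous_zero[OF hom] by simp
qed

lemma le_dual_norm_mult_norm:
  assumes hom: "homogeneous_on V L"
    and bdd: "bdd_above {L h | h. h \<in> V \<and> N h \<le> 1}"
    and h: "h \<in> V"
  shows "L h \<le> dual_norm V N L * N h"
proof (cases "N h = 0")
  case True
  then show ?thesis
    using h homogeneous_zero[OF hom] by (simp add: normed_fun_space_norm_eq_zero normed_fun_space_norm_zero)
next
  case False
  then have pos: "0 < N h"
    using normed_fun_space_norm_nonneg[OF h] by simp
  let ?g = "\<lambda>x. (1 / N h) * h x"
  have "?g \<in> V"
    by (rule normed_fun_space_scale_mem[OF h])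
  moreover have "N ?g = 1"
    using normed_fun_space_norm_scale[OF h, of "1 / N h"] pos by simp
  ultimately have "L ?g \<le> dual_norm V N L"
    unfolding dual_norm_def by (intro cSup_upper[OF _ bdd]) (blast intro: eq_refl)
  moreover have "L ?g = (1 / N h) * L h"
    using hom h unfolding homogeneous_on_def by blast
  ultimately show ?thesis
    using pos by (simp add: pos_divide_le_eq)
qed

lemma exists_near_dual_norm:
  assumes bdd: "bdd_above {L h | h. h \<in> V \<and> N h \<le> 1}" and "0 < e"
  shows "\<exists>g. g \<in> V \<and> N g \<le> 1 \<and> dual_norm V N L - e < L g"
proof -
  have "{L h | h. h \<in> V \<and> N h \<le> 1} \<noteq> {}"
    using normed_fun_space_zero_mem normed_fun_space_norm_zero by auto
  moreover have "dual_norm V N L - e < Sup {L h | h. h \<in> V \<and> N h \<le> 1}"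
    using \<open>0 < e\<close> unfolding dual_norm_def by simp
  ultimately show ?thesis
    using less_cSup_iff[OF _ bdd] by blast
qed

lemma weighted_sum_mem_joint_values:
  assumes hom: "\<forall>u\<in>U. homogeneous_on V (L u)"
    and g: "\<And>u. u \<in> U \<Longrightarrow> g u \<in> V \<and> N (g u) \<le> 1"
    and c: "(\<Sum>u\<in>U. (c u)\<^sup>2) \<le> 1"
  shows "(\<Sum>u\<in>U. c u * L u (g u)) \<in> joint_values U V N L"
proof -
  let ?h = "\<lambda>u x. c u * g u x"
  have "(\<Sum>u\<in>U. (N (?h u))\<^sup>2) \<le> (\<Sum>u\<in>U. (c u)\<^sup>2)"
  proof (rule sum_mono)
    fix u assume u: "u \<in> U"
    have "(N (g u))\<^sup>2 \<le> 1"
      using g[OF u] normed_fun_space_norm_nonneg[of "g u"] by (simp add: power_le_one)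
    then have "(c u)\<^sup>2 * (N (g u))\<^sup>2 \<le> (c u)\<^sup>2"
      by (simp add: mult_left_le)
    then show "(N (?h u))\<^sup>2 \<le> (c u)\<^sup>2"
      using normed_fun_space_norm_scale[of "g u" "c u"] g[OF u] by (simp add: power_mult_distrib)
  qed
  then have "(\<Sum>u\<in>U. L u (?h u)) \<in> joint_values U V N L"
    unfolding joint_values_def mem_Collect_eq
    using c g normed_fun_space_scale_mem by (intro exI[of _ ?h]) auto
  moreover have "(\<Sum>u\<in>U. L u (?h u)) = (\<Sum>u\<in>U. c u * L u (g u))"
    using hom g unfolding homogeneous_on_def by simp
  ultimately show ?thesis
    by simp
qed

lemma zero_mem_joint_values:
  assumes hom: "\<forall>u\<in>U. homogeneous_on V (L u)"
  shows "0 \<in> joint_values U V N L"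
  using weighted_sum_mem_joint_values[OF hom, where g="\<lambda>_ _. 0" and c="\<lambda>_. 0"]
    normed_fun_space_zero_mem normed_fun_space_norm_zero by simp

lemma single_mem_joint_values:
  assumes hom: "\<forall>u\<in>U. homogeneous_on V (L u)"
    and "finite U" "v \<in> U" "h \<in> V" "N h \<le> 1"
  shows "L v h \<in> joint_values U V N L"
proof -
  let ?c = "\<lambda>u. if u = v then 1 else 0 :: real"
  have "(\<Sum>u\<in>U. (?c u)\<^sup>2) = 1" "(\<Sum>u\<in>U. ?c u * L u h) = L v h"
    using \<open>finite U\<close> \<open>v \<in> U\<close>
    by (simp_all add: if_distrib[of "\<lambda>x. x\<^sup>2"] if_distrib[of "\<lambda>x. x * L _ h"] cong: if_cong)
  then show ?thesis
    using weighted_sum_mem_joint_values[OF hom, where g="\<lambda>_. h" and c="?c"] assms(4,5) by simp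
qed

lemma bdd_above_dual_of_joint:
  assumes hom: "\<forall>u\<in>U. homogeneous_on V (L u)"
    and "finite U" "bdd_above (joint_values U V N L)" "v \<in> U"
  shows "bdd_above {L v h | h. h \<in> V \<and> N h \<le> 1}"
  using assms(3) by (rule bdd_above_mono) (use single_mem_joint_values[OF hom assms(2,4)] in blast)

lemma joint_values_le_L2_set:
  assumes hom: "\<forall>u\<in>U. homogeneous_on V (L u)"
    and bdd: "\<forall>u\<in>U. bdd_above {L u h | h. h \<in> V \<and> N h \<le> 1}"
    and y: "y \<in> joint_values U V N L"
  shows "y \<le> L2_set (\<lambda>u. dual_norm V N (L u)) U"
proof -
  obtain h where h: "\<forall>u\<in>U. h u \<in> V" "(\<Sum>u\<in>U. (N (h u))\<^sup>2) \<le> 1"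
    and y_eq: "y = (\<Sum>u\<in>U. L u (h u))"
    using y unfolding joint_values_def by blast
  let ?I = "\<lambda>u. dual_norm V N (L u)"
  have "y \<le> (\<Sum>u\<in>U. ?I u * N (h u))"
    unfolding y_eq using hom bdd h(1) by (intro sum_mono le_dual_norm_mult_norm) auto
  also have "\<dots> \<le> (\<Sum>u\<in>U. \<bar>?I u\<bar> * \<bar>N (h u)\<bar>)"
    by (intro sum_mono) (simp flip: abs_mult)
  also have "\<dots> \<le> L2_set ?I U * L2_set (\<lambda>u. N (h u)) U"
    by (rule L2_set_mult_ineq)
  also have "\<dots> \<le> L2_set ?I U"
    using h(2) by (intro mult_left_le L2_set_nonneg) (simp add: L2_set_def)
  finally show ?thesis .
qed

lemma L2_set_le_Sup_joint_values:
  assumes hom: "\<forall>u\<in>U. homogeneous_on V (L u)"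
    and bdd: "\<forall>u\<in>U. bdd_above {L u h | h. h \<in> V \<and> N h \<le> 1}"
    and bdd_joint: "bdd_above (joint_values U V N L)"
  shows "L2_set (\<lambda>u. dual_norm V N (L u)) U \<le> Sup (joint_values U V N L)"
proof (rule field_le_epsilon)
  fix \<epsilon> :: real
  assume "0 < \<epsilon>"
  define I where "I u = dual_norm V N (L u)" for u
  define S where "S = L2_set I U"
  define c where "c u = I u / S" for u
  define \<delta> where "\<delta> = \<epsilon> / ((\<Sum>u\<in>U. c u) + 1)"
  have c_nonneg: "0 \<le> c u" if "u \<in> U" for u
    using dual_norm_nonneg hom bdd that unfolding c_def I_def S_def by simp
  then have "0 \<le> (\<Sum>u\<in>U. c u)"
    by (simp add: sum_nonneg)
  then have "0 < \<delta>"
    using \<open>0 < \<epsilon>\<close> unfolding \<delta>_def by simp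
  have \<delta>_small: "\<delta> * (\<Sum>u\<in>U. c u) \<le> \<epsilon>"
  proof -
    have "\<delta> * (\<Sum>u\<in>U. c u) \<le> \<delta> * ((\<Sum>u\<in>U. c u) + 1)"
      using \<open>0 < \<delta>\<close> by simp
    also have "\<dots> = \<epsilon>"
      using \<open>0 \<le> (\<Sum>u\<in>U. c u)\<close> unfolding \<delta>_def by simp
    finally show ?thesis .
  qed
  have "\<exists>g. g \<in> V \<and> N g \<le> 1 \<and> I u - \<delta> < L u g" if "u \<in> U" for u
    unfolding I_def by (rule exists_near_dual_norm) (use bdd that \<open>0 < \<delta>\<close> in auto)
  then have "\<exists>g. \<forall>u\<in>U. g u \<in> V \<and> N (g u) \<le> 1 \<and> I u - \<delta> < L u (g u)"
    by (intro bchoice ballI)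
  then obtain g where "\<forall>u\<in>U. g u \<in> V \<and> N (g u) \<le> 1 \<and> I u - \<delta> < L u (g u)"
    by blast
  then have g: "\<And>u. u \<in> U \<Longrightarrow> g u \<in> V \<and> N (g u) \<le> 1"
    and g_near: "\<And>u. u \<in> U \<Longrightarrow> I u - \<delta> < L u (g u)"
    by auto
  have S_square: "S\<^sup>2 = (\<Sum>u\<in>U. (I u)\<^sup>2)"
    unfolding S_def by (rule power2_L2_set)
  have "(\<Sum>u\<in>U. (c u)\<^sup>2) = (\<Sum>u\<in>U. (I u)\<^sup>2) / S\<^sup>2"
    unfolding c_def by (simp add: power_divide sum_divide_distrib)
  also have "\<dots> \<le> 1"
    by (simp flip: S_square)
  finally have "(\<Sum>u\<in>U. c u * L u (g u)) \<le> Sup (joint_values U V N L)"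
    using weighted_sum_mem_joint_values[OF hom g] bdd_joint by (intro cSup_upper) auto
  moreover have "S - \<epsilon> \<le> (\<Sum>u\<in>U. c u * L u (g u))"
  proof -
    have "(\<Sum>u\<in>U. c u * I u) = (\<Sum>u\<in>U. (I u)\<^sup>2) / S"
      unfolding c_def by (simp add: power2_eq_square sum_divide_distrib)
    also have "\<dots> = S"
      \<comment> \<open>\<open>S\<^sup>2 / S = S\<close> holds also for \<open>S = 0\<close>, since \<open>x / 0 = 0\<close>.\<close>
      unfolding S_square[symmetric] by (cases "S = 0") (simp_all add: power2_eq_square)
    finally have "(\<Sum>u\<in>U. c u * I u) = S" .
    then have "S - \<delta> * (\<Sum>u\<in>U. c u) = (\<Sum>u\<in>U. c u * (I u - \<delta>))"
      by (simp add: algebra_simps sum_subtractf sum_distrib_left)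
    also have "\<dots> \<le> (\<Sum>u\<in>U. c u * L u (g u))"
      using g_near c_nonneg by (intro sum_mono mult_left_mono) (auto intro: less_imp_le)
    finally show ?thesis
      using \<delta>_small by linarith
  qed
  ultimately show "L2_set I U \<le> Sup (joint_values U V N L) + \<epsilon>"
    unfolding S_def by linarith
qed

lemma Sup_joint_values:
  assumes hom: "\<forall>u\<in>U. homogeneous_on V (L u)"
    and "finite U" and bdd_joint: "bdd_above (joint_values U V N L)"
  shows "Sup (joint_values U V N L) = L2_set (\<lambda>u. dual_norm V N (L u)) U"
proof -
  have bdd: "\<forall>u\<in>U. bdd_above {L u h | h. h \<in> V \<and> N h \<le> 1}"
    using bdd_above_dual_of_joint[OF hom \<open>finite U\<close> bdd_joint] by (rule ballI)
  show ?thesis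
    using zero_mem_joint_values[OF hom] joint_values_le_L2_set[OF hom bdd]
      L2_set_le_Sup_joint_values[OF hom bdd bdd_joint]
    by (intro antisym cSup_least) auto
qed

end

lemma minimizer_of_separable_sum:
  fixes f :: "'i \<Rightarrow> ('j \<Rightarrow> 'a) \<Rightarrow> 'b::{comm_monoid_add, ordered_ab_semigroup_add_imp_le}"
  assumes "finite U" "u \<in> U"
    and min: "\<And>w. (\<Sum>v\<in>U. f v (\<lambda>i. w_hat i v)) \<le> (\<Sum>v\<in>U. f v (\<lambda>i. w i v))"
  shows "f u (\<lambda>i. w_hat i u) \<le> f u wu"
proof -
  define w where "w i v = (if v = u then wu i else w_hat i v)" for i v
  have "(\<Sum>v\<in>U. f v (\<lambda>i. w i v)) = f u (\<lambda>i. w i u) + (\<Sum>v\<in>U - {u}. f v (\<lambda>i. w i v))"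
    by (rule sum.remove[OF assms(1,2)])
  also have "\<dots> = f u wu + (\<Sum>v\<in>U - {u}. f v (\<lambda>i. w_hat i v))"
    by (auto simp: w_def intro!: sum.cong)
  finally have "(\<Sum>v\<in>U. f v (\<lambda>i. w i v)) = f u wu + (\<Sum>v\<in>U - {u}. f v (\<lambda>i. w_hat i v))" .
  moreover have "(\<Sum>v\<in>U. f v (\<lambda>i. w_hat i v))
      = f u (\<lambda>i. w_hat i u) + (\<Sum>v\<in>U - {u}. f v (\<lambda>i. w_hat i v))"
    by (rule sum.remove[OF assms(1,2)])
  ultimately show ?thesis
    using min[of w] by simp
qed

definition imbalance_functional :: "nat \<Rightarrow> (nat \<Rightarrow> 'x) \<Rightarrow> (nat \<Rightarrow> nat \<Rightarrow> real)
    \<Rightarrow> (nat \<Rightarrow> nat \<Rightarrow> real) \<Rightarrow> nat \<Rightarrow> (nat \<Rightarrow> real) \<Rightarrow> ('x \<Rightarrow> real) \<Rightarrow> real"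
  where "imbalance_functional n X io r u wu h =
    (1 / real n) * (\<Sum>i<n. r i u * h (X i) - io i u * r i u * wu i * h (X i))"

lemma homogeneous_on_imbalance_functional:
  "homogeneous_on V (imbalance_functional n X io r u wu)"
  unfolding homogeneous_on_def imbalance_functional_def by (simp add: sum_distrib_left algebra_simps)

lemma Iu_fun_eq_dual_norm:
  "Iu_fun n u V N X io r wu = dual_norm V N (imbalance_functional n X io r u wu)"
  unfolding Iu_fun_def Iu_set_def dual_norm_def imbalance_functional_def ..

lemma I_set_eq_joint_values:
  "I_set n U V N X io r w = joint_values U V N (\<lambda>u. imbalance_functional n X io r u (\<lambda>i. w i u))"
proof -
  have "(1 / real n) * (\<Sum>i<n. \<Sum>u\<in>U. r i u * h u (X i) - io i u * r i u * w i u * h u (X i))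
      = (\<Sum>u\<in>U. imbalance_functional n X io r u (\<lambda>i. w i u) (h u))" for h
    unfolding imbalance_functional_def sum_distrib_left by (rule sum.swap)
  then show ?thesis
    unfolding I_set_def joint_values_def by simp
qed

lemma obj_eq_sum_obj_u:
  assumes "normed_fun_space V N" "finite U" "bdd_above (I_set n U V N X io r w)"
  shows "obj n t U V N X io r \<sigma> w = (\<Sum>u\<in>U. obj_u n t u V N X io r \<sigma> (\<lambda>i. w i u))"
proof -
  have "\<forall>u\<in>U. homogeneous_on V (imbalance_functional n X io r u (\<lambda>i. w i u))"
    by (simp add: homogeneous_on_imbalance_functional)
  from Sup_joint_values[OF assms(1) this assms(2)] assms(3)
  have "(I_fun n U V N X io r w)\<^sup>2 = (\<Sum>u\<in>U. (Iu_fun n u V N X io r (\<lambda>i. w i u))\<^sup>2)"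
    unfolding I_fun_def I_set_eq_joint_values Iu_fun_eq_dual_norm by (simp add: power2_L2_set)
  then show ?thesis
    unfolding obj_def obj_u_def
    by (simp add: sum.distrib sum_distrib_left sum.swap[of _ U "{..<n}"])
qed

theorem lemma1:
  fixes n t tmax a :: nat
    and A :: "nat \<Rightarrow> nat" and Tt :: "nat \<Rightarrow> real"
    and X :: "nat \<Rightarrow> 'x" and r :: "nat \<Rightarrow> nat \<Rightarrow> real"
    and V :: "('x \<Rightarrow> real) set" and N :: "('x \<Rightarrow> real) \<Rightarrow> real"
    and \<sigma> :: real and w_hat :: "nat \<Rightarrow> nat \<Rightarrow> real"
  defines "U \<equiv> {u. u \<le> tmax \<and> u \<le> t}"
  defines "io \<equiv> iota A Tt a"
  assumes "n \<ge> 1" and "a \<in> {0, 1}" and "\<forall>i<n. A i \<in> {0, 1}" and "t \<le> tmax"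
    and "normed_fun_space V N" and "\<sigma> > 0"
    and well_defined: "\<forall>w. bdd_above (I_set n U V N X io r w)"
    and minimizer: "\<forall>w. obj n t U V N X io r \<sigma> w_hat \<le> obj n t U V N X io r \<sigma> w"
  shows "\<forall>u\<in>U. \<forall>wu. obj_u n t u V N X io r \<sigma> (\<lambda>i. w_hat i u) \<le> obj_u n t u V N X io r \<sigma> wu"
proof (intro ballI allI)
  fix u wu
  assume "u \<in> U"
  have "finite U"
    unfolding U_def by simp
  have separable: "obj n t U V N X io r \<sigma> w = (\<Sum>v\<in>U. obj_u n t v V N X io r \<sigma> (\<lambda>i. w i v))" for w
    by (rule obj_eq_sum_obj_u[OF \<open>normed_fun_space V N\<close> \<open>finite U\<close> well_defined[rule_format]])
  show "obj_u n t u V N X io r \<sigma> (\<lambda>i. w_hat i u) \<le> obj_u n t u V N X io r \<sigma> wu"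
  proof (rule minimizer_of_separable_sum[where f = "\<lambda>v. obj_u n t v V N X io r \<sigma>"])
    show "(\<Sum>v\<in>U. obj_u n t v V N X io r \<sigma> (\<lambda>i. w_hat i v))
        \<le> (\<Sum>v\<in>U. obj_u n t v V N X io r \<sigma> (\<lambda>i. w i v))" for w
      using minimizer unfolding separable by blast
  qed (use \<open>finite U\<close> \<open>u \<in> U\<close> in auto)
qed

end
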